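(* Let $m,n,s,k,c$ be positive integers with $s$ or $k$ odd, and let $\Gamma$ be an abelian group of order $nkc$ having exactly one involution. Then there is no $\mathrm{MRS}_\Gamma(m,n;s,k;c)$.
   Context: For positive integers $m,n,s,k,c$ and an abelian group $\Gamma$ of order $nkc$, an $\mathrm{MRS}_\Gamma(m,n;s,k;c)$ is a set of $c$ partially filled $m\times n$ arrays (some cells may be empty) with entries in $\Gamma$ such that: every element of $\Gamma$ appears exactly once and in a unique array; in every array each row contains exactly $s$ filled cells and each column contains exactly $k$ filled cells; and there exist $\omega,\delta\in\Gamma$ such that in every array the sum of the entries of each row is $\omega$ and the sum of the entries of each column is $\delta$. An involution is an element of order $2$. *)

theory Defs
  imports Main "HOL-Library.Cardinality"
begin

text \<open>The c arrays are encoded by A :: nat => nat => nat => 'a option: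
  A t i j is the content of cell (i,j) of array t (t < c, i < m, j < n);
  None means the cell is empty. Values of A outside these ranges are irrelevant.\<close>

definition entry :: "'a::ab_group_add option \<Rightarrow> 'a" where
  "entry x = (case x of None \<Rightarrow> 0 | Some g \<Rightarrow> g)"

definition MRS :: "nat \<Rightarrow> nat \<Rightarrow> nat \<Rightarrow> nat \<Rightarrow> nat \<Rightarrow>
    (nat \<Rightarrow> nat \<Rightarrow> nat \<Rightarrow> 'a::{ab_group_add,finite} option) \<Rightarrow> bool" where
  "MRS m n s k c A \<longleftrightarrow>
     CARD('a) = n * k * c \<and>
     (\<forall>g::'a. \<exists>!p. (case p of (t, i, j) \<Rightarrow> t < c \<and> i < m \<and> j < n \<and> A t i j = Some g)) \<and>
     (\<forall>t<c. \<forall>i<m. card {j. j < n \<and> A t i j \<noteq> None} = s) \<and>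
     (\<forall>t<c. \<forall>j<n. card {i. i < m \<and> A t i j \<noteq> None} = k) \<and>
     (\<exists>\<omega> \<delta>. (\<forall>t<c. \<forall>i<m. (\<Sum>j<n. entry (A t i j)) = \<omega>) \<and>
             (\<forall>t<c. \<forall>j<n. (\<Sum>i<m. entry (A t i j)) = \<delta>))"

definition involution :: "'a::ab_group_add \<Rightarrow> bool" where
  "involution x \<longleftrightarrow> x \<noteq> 0 \<and> x + x = 0"

end

theory Submission
  imports Defs "HOL-Library.Disjoint_Sets"
begin

text \<open>Pairing every element of \<open>\<Gamma>\<close> with its inverse shows that the sum of all
  elements of \<open>\<Gamma>\<close> is its unique involution \<open>\<iota>\<close>. Summing all entries of an MRS row by
  row gives \<open>\<iota> = cm\<omega>\<close>; as the rows contain \<open>|\<Gamma>| = cms\<close> filled cells,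
  \<open>s\<iota> = |\<Gamma>|\<omega> = 0\<close>. Summing column by column gives \<open>k\<iota> = |\<Gamma>|\<delta> = 0\<close> in the
  same way. But an odd multiple of \<open>\<iota>\<close> is \<open>\<iota> \<noteq> 0\<close>.\<close>

fun nat_multiple :: "nat \<Rightarrow> 'a::monoid_add \<Rightarrow> 'a" where
  "nat_multiple 0 g = 0"
| "nat_multiple (Suc n) g = g + nat_multiple n g"

lemma nat_multiple_add: "nat_multiple (a + b) g = nat_multiple a g + nat_multiple b g"
  by (induction a) (simp_all add: add.assoc)

lemma nat_multiple_mult: "nat_multiple (a * b) g = nat_multiple a (nat_multiple b g)"
  by (induction a) (simp_all add: nat_multiple_add)

lemma nat_multiple_zero [simp]: "nat_multiple n 0 = 0"
  by (induction n) simp_all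

lemma sum_constant_nat_multiple:
  "(\<Sum>x\<in>A. g) = nat_multiple (card A) (g::'a::comm_monoid_add)"
  by (induction A rule: infinite_finite_induct) simp_all

lemma nat_multiple_odd_self:
  assumes "x + x = 0" and "odd n"
  shows "nat_multiple n x = x"
proof -
  obtain q where n: "n = q * 2 + 1"
    using \<open>odd n\<close> by (metis oddE mult.commute)
  have "nat_multiple 2 x = 0"
    using \<open>x + x = 0\<close> by (simp add: numeral_2_eq_2)
  then show ?thesis
    unfolding n by (simp add: nat_multiple_add nat_multiple_mult)
qed

lemma nat_multiple_card_UNIV: "nat_multiple CARD('a) (g::'a::{ab_group_add,finite}) = 0"
proof -
  have "(\<Sum>x\<in>UNIV. g + x) = (\<Sum>x\<in>UNIV. x)"
    by (rule sum.reindex_bij_betw) simp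
  then show ?thesis
    by (simp add: sum.distrib sum_constant_nat_multiple)
qed

lemma sum_UNIV_eq_unique_involution:
  fixes \<iota> :: "'a::{ab_group_add,finite}"
  assumes "involution \<iota>" and unique: "\<And>x. involution x \<Longrightarrow> x = \<iota>"
  shows "(\<Sum>x\<in>UNIV. x) = \<iota>"
proof -
  have "\<iota> \<noteq> 0" and "- \<iota> = \<iota>"
    using \<open>involution \<iota>\<close> by (auto simp: involution_def add_eq_0_iff)
  have no_fixed_point: "- x \<noteq> x" if "x \<notin> {0, \<iota>}" for x :: 'a
  proof
    assume "- x = x"
    then have "x + x = 0"
      by (metis add.left_inverse)
    then show False
      using that unique by (auto simp: involution_def)
  qed
  have "(\<Sum>x\<in>UNIV - {0, \<iota>}. x) = 0"
  proof (rule sum_involution_eq_0[where h = uminus])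
    fix x assume x: "x \<in> UNIV - {0, \<iota>}"
    then show "- x \<in> UNIV - {0, \<iota>}"
      using \<open>- \<iota> = \<iota>\<close> by (auto simp: minus_equation_iff)
    show "- x \<noteq> x"
      using x no_fixed_point by simp
  qed simp_all
  moreover have "(\<Sum>x\<in>UNIV. x) = (\<Sum>x\<in>UNIV - {0, \<iota>}. x) + (\<Sum>x\<in>{0, \<iota>}. x)"
    by (rule sum.subset_diff) auto
  ultimately show ?thesis
    using \<open>\<iota> \<noteq> 0\<close> by simp
qed

definition filled_cells ::
    "nat \<Rightarrow> nat \<Rightarrow> nat \<Rightarrow> (nat \<Rightarrow> nat \<Rightarrow> nat \<Rightarrow> 'a option) \<Rightarrow> (nat \<times> nat \<times> nat) set"
  where "filled_cells c m n A = (SIGMA t:{..<c}. SIGMA i:{..<m}. {j. j < n \<and> A t i j \<noteq> None})"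

lemma MRS_bij_betw_filled_cells:
  assumes "MRS m n s k c A"
  shows "bij_betw (\<lambda>(t, i, j). the (A t i j)) (filled_cells c m n A) UNIV"
proof (rule bij_betwI')
  define cell_of where "cell_of g = (\<lambda>(t, i, j). t < c \<and> i < m \<and> j < n \<and> A t i j = Some g)" for g
  let ?entry = "\<lambda>(t, i, j). the (A t i j)"
  have "\<forall>g. \<exists>!p. cell_of g p"
    using assms unfolding MRS_def cell_of_def by (elim conjE) assumption
  then have unique: "\<exists>!p. cell_of g p" for g ..
  have cell_of_entry: "cell_of (?entry p) p" if "p \<in> filled_cells c m n A" for p
    using that by (cases p) (auto simp: filled_cells_def cell_of_def)
  show "(?entry p = ?entry q) = (p = q)"
    if "p \<in> filled_cells c m n A" and "q \<in> filled_cells c m n A" for p q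
  proof
    assume "?entry p = ?entry q"
    then have "cell_of (?entry q) p"
      using cell_of_entry[OF that(1)] by simp
    moreover have "cell_of (?entry q) q"
      using cell_of_entry[OF that(2)] .
    ultimately show "p = q"
      using unique by blast
  qed simp
  show "\<exists>p\<in>filled_cells c m n A. g = ?entry p" for g
  proof -
    obtain p where "cell_of g p"
      using unique by blast
    then obtain t i j where "t < c" "i < m" "j < n" "A t i j = Some g"
      by (cases p) (auto simp: cell_of_def)
    then show ?thesis
      by (intro bexI[of _ "(t, i, j)"]) (auto simp: filled_cells_def)
  qed
qed simp

lemma MRS_card_eq_rows:
  assumes "MRS m n s k c (A :: nat \<Rightarrow> nat \<Rightarrow> nat \<Rightarrow> 'a::{ab_group_add,finite} option)"
  shows "CARD('a) = c * m * s"
proof -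
  have "CARD('a) = card (filled_cells c m n A)"
    using bij_betw_same_card[OF MRS_bij_betw_filled_cells[OF assms]] by simp
  also have "\<dots> = (\<Sum>t<c. \<Sum>i<m. card {j. j < n \<and> A t i j \<noteq> None})"
    by (simp add: filled_cells_def)
  also have "\<dots> = c * m * s"
    using assms by (simp add: MRS_def)
  finally show ?thesis .
qed

lemma MRS_sum_UNIV_eq_sum_entries:
  assumes "MRS m n s k c (A :: nat \<Rightarrow> nat \<Rightarrow> nat \<Rightarrow> 'a::{ab_group_add,finite} option)"
  shows "(\<Sum>x\<in>UNIV. x) = (\<Sum>t<c. \<Sum>i<m. \<Sum>j<n. entry (A t i j))"
proof -
  have "(\<Sum>x\<in>UNIV. x) = (\<Sum>(t, i, j)\<in>filled_cells c m n A. the (A t i j))"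
    using sum.reindex_bij_betw[OF MRS_bij_betw_filled_cells[OF assms], of "\<lambda>x. x"] by simp
  also have "\<dots> = (\<Sum>(t, i, j)\<in>filled_cells c m n A. entry (A t i j))"
    by (rule sum.cong) (auto simp: filled_cells_def entry_def)
  also have "\<dots> = (\<Sum>t<c. \<Sum>i<m. \<Sum>j | j < n \<and> A t i j \<noteq> None. entry (A t i j))"
    by (simp add: filled_cells_def sum.Sigma)
  also have "\<dots> = (\<Sum>t<c. \<Sum>i<m. \<Sum>j<n. entry (A t i j))"
    by (intro sum.cong refl sum.mono_neutral_left) (auto simp: entry_def)
  finally show ?thesis .
qed

lemma MRS_nat_multiple_sum_UNIV_eq_0:
  assumes "MRS m n s k c (A :: nat \<Rightarrow> nat \<Rightarrow> nat \<Rightarrow> 'a::{ab_group_add,finite} option)"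
  shows "nat_multiple s (\<Sum>x::'a\<in>UNIV. x) = 0" and "nat_multiple k (\<Sum>x::'a\<in>UNIV. x) = 0"
proof -
  obtain \<omega> \<delta> where
    rows: "\<forall>t<c. \<forall>i<m. (\<Sum>j<n. entry (A t i j)) = \<omega>" and
    columns: "\<forall>t<c. \<forall>j<n. (\<Sum>i<m. entry (A t i j)) = \<delta>"
    using assms unfolding MRS_def by (elim conjE exE) (rule that; assumption)
  have "(\<Sum>x\<in>UNIV. x) = (\<Sum>t<c. \<Sum>i<m. \<omega>)"
    using rows by (simp add: MRS_sum_UNIV_eq_sum_entries[OF assms])
  then have "nat_multiple s (\<Sum>x\<in>UNIV. x) = nat_multiple (c * m * s) \<omega>"
    by (simp add: sum_constant_nat_multiple flip: nat_multiple_mult) (simp add: ac_simps)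
  also have "\<dots> = 0"
    using nat_multiple_card_UNIV[of \<omega>] by (simp add: MRS_card_eq_rows[OF assms])
  finally show "nat_multiple s (\<Sum>x::'a\<in>UNIV. x) = 0" .
  have "(\<Sum>x\<in>UNIV. x) = (\<Sum>t<c. \<Sum>j<n. \<Sum>i<m. entry (A t i j))"
    by (simp add: MRS_sum_UNIV_eq_sum_entries[OF assms] sum.swap[of _ "{..<m}"])
  also have "\<dots> = (\<Sum>t<c. \<Sum>j<n. \<delta>)"
    using columns by simp
  finally have "nat_multiple k (\<Sum>x\<in>UNIV. x) = nat_multiple (n * k * c) \<delta>"
    by (simp add: sum_constant_nat_multiple flip: nat_multiple_mult) (simp add: ac_simps)
  also have "\<dots> = 0"
    using nat_multiple_card_UNIV[of \<delta>] assms by (simp add: MRS_def)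
  finally show "nat_multiple k (\<Sum>x::'a\<in>UNIV. x) = 0" .
qed

theorem corollary3p7:
  fixes m n s k c :: nat
  assumes "m > 0" "n > 0" "s > 0" "k > 0" "c > 0"
    and "odd s \<or> odd k"
    and "CARD('a::{ab_group_add,finite}) = n * k * c"
    and "\<exists>!x::'a. involution x"
  shows "\<not> (\<exists>A :: nat \<Rightarrow> nat \<Rightarrow> nat \<Rightarrow> 'a option. MRS m n s k c A)"
proof
  assume "\<exists>A :: nat \<Rightarrow> nat \<Rightarrow> nat \<Rightarrow> 'a option. MRS m n s k c A"
  then obtain A :: "nat \<Rightarrow> nat \<Rightarrow> nat \<Rightarrow> 'a option" where "MRS m n s k c A" ..
  obtain \<iota> :: 'a where "involution \<iota>" and "\<And>x. involution x \<Longrightarrow> x = \<iota>"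
    using \<open>\<exists>!x::'a. involution x\<close> by blast
  then have "(\<Sum>x\<in>UNIV. x) = \<iota>"
    by (rule sum_UNIV_eq_unique_involution)
  note annihilated = MRS_nat_multiple_sum_UNIV_eq_0[OF \<open>MRS m n s k c A\<close>, unfolded this]
  have "\<iota> + \<iota> = 0" and "\<iota> \<noteq> 0"
    using \<open>involution \<iota>\<close> by (simp_all add: involution_def)
  from \<open>odd s \<or> odd k\<close> have "\<iota> = 0"
  proof
    assume "odd s"
    then show "\<iota> = 0"
      using annihilated(1) nat_multiple_odd_self[OF \<open>\<iota> + \<iota> = 0\<close>] by simp
  next
    assume "odd k"
    then show "\<iota> = 0"
      using annihilated(2) nat_multiple_odd_self[OF \<open>\<iota> + \<iota> = 0\<close>] by simp
  qed
  with \<open>\<iota> \<noteq> 0\<close> show False ..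
qed

end
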